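(* $$L_{\mathbb{R},2}(\ell_\infty^2)=\sup\left\{\left[2t^{4/3}+2\left(\sqrt{t(1-t)}\right)^{4/3}\right]^{3/4}: t\in[1/2,1]\right\}\approx 1.7700,$$ the supremum being attained at some $t_0\approx 0.9147$. In particular $L_{\mathbb{R},2}\ge 1.7700$.
   Context: All spaces are real. For an $m$-homogeneous polynomial $P$ on a Banach space, $\check P$ denotes its polar (the unique symmetric $m$-linear form with $\check P(x,\dots,x)=P(x)$). For vectors $x_1,\dots,x_N$ in a Banach space $X$, $\|(x_j)_{j=1}^N\|_{w,1}=\sup\{\sum_{j=1}^N|\varphi(x_j)|:\varphi\in X',\|\varphi\|\le1\}$. $L_{\mathbb{R},m}$ denotes the smallest constant $L$ such that for every real Banach space $X$, every continuous $m$-homogeneous polynomial $P:X\to\mathbb{R}$, every $N$ and all $x^{(k)}_j\in X$ ($1\le j\le N$, $1\le k\le m$), $$\Big(\sum_{j_1,\dots,j_m=1}^N|\check P(x^{(1)}_{j_1},\dots,x^{(m)}_{j_m})|^{\frac{2m}{m+1}}\Big)^{\frac{m+1}{2m}}\le L\|P\|\prod_{k=1}^m\|(x^{(k)}_j)_{j=1}^N\|_{w,1}.$$ $\ell_\infty^n$ is $\mathbb{R}^n$ with the sup norm; for a polynomial $P$ on $\ell_\infty^n$, $\|P\|=\sup\{|P(x)|:x\in[-1,1]^n\}$. For $P$ an $m$-homogeneous polynomial on $\ell_\infty^n$ put $\Phi_{m,n}(P)=\big(\sum_{i_1,\dots,i_m=1}^n|\check P(e_{i_1},\dots,e_{i_m})|^{\frac{2m}{m+1}}\big)^{\frac{m+1}{2m}}$,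 and $L_{\mathbb{R},m}(\ell_\infty^n)=\sup\{\Phi_{m,n}(P): P \text{ $m$-homogeneous on } \ell_\infty^n,\ \|P\|\le1\}$. One has $L_{\mathbb{R},m}\ge L_{\mathbb{R},m}(\ell_\infty^n)$ (take $x^{(k)}_j=e_j$). *)

theory Defs
  imports "HOL-Analysis.Analysis"
begin

text \<open>Points of the n-dimensional real space are modelled as functions nat => real;
  only the coordinates below n matter.\<close>

definition hom2_poly :: "nat \<Rightarrow> ((nat \<Rightarrow> real) \<Rightarrow> real) \<Rightarrow> bool" where
  "hom2_poly n P \<longleftrightarrow> (\<exists>c :: nat \<Rightarrow> nat \<Rightarrow> real.
      \<forall>x. P x = (\<Sum>i<n. \<Sum>j<n. c i j * x i * x j))"

definition polar2 :: "((nat \<Rightarrow> real) \<Rightarrow> real) \<Rightarrow> (nat \<Rightarrow> real) \<Rightarrow> (nat \<Rightarrow> real) \<Rightarrow> real" where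
  "polar2 P x y = (P (\<lambda>i. x i + y i) - P (\<lambda>i. x i - y i)) / 4"

definition poly_norm :: "nat \<Rightarrow> ((nat \<Rightarrow> real) \<Rightarrow> real) \<Rightarrow> real" where
  "poly_norm n P = Sup {\<bar>P x\<bar> | x. \<forall>i<n. \<bar>x i\<bar> \<le> 1}"

definition unitv :: "nat \<Rightarrow> nat \<Rightarrow> real" where
  "unitv i = (\<lambda>j. if j = i then 1 else 0)"

definition Phi2 :: "nat \<Rightarrow> ((nat \<Rightarrow> real) \<Rightarrow> real) \<Rightarrow> real" where
  "Phi2 n P = (\<Sum>i<n. \<Sum>j<n. \<bar>polar2 P (unitv i) (unitv j)\<bar> powr (4/3)) powr (3/4)"

definition L2_linf :: "nat \<Rightarrow> real" where
  "L2_linf n = Sup {Phi2 n P | P. hom2_poly n P \<and> poly_norm n P \<le> 1}"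

end

theory Submission imports Defs begin

(* A 2-homogeneous polynomial on R^2 is a quadratic form
       a x^2 + b y^2 + 2 d x y; its polar has entries a, d, d, b, so
       Phi2 2 P = (|a|^(4/3) + |b|^(4/3) + 2|d|^(4/3))^(3/4), and
       poly_norm 2 P <= 1 says the form is bounded by 1 on the square [-1,1]^2.

   (2) The profile g t = 2 t^(4/3) + 2 (t(1-t))^(2/3), i.e. f = g^(3/4).  The sign
       of g' on ]0,1[ is that of the cubic h t = 8 t^2 (1-t) - (2t-1)^3, which has a
       single root 'peak' ~ 0.91474 on [1/2,1]; hence g is maximal at 'peak' on
       [0,1] (using g t <= g (1-t) for t <= 1/2).  Rational bounds on 'peak' and
       on g peak give the numerical claims.

   By sign and swap symmetries of the form it suffices to
       bound |a|^(4/3) + |b|^(4/3) + 2|d|^(4/3) by g peak when 0 <= d and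
       |b| <= a; testing the form at (1,1) and (1, d/|b|) reduces this to g a or
       to a value <= 2 = g 1.  The form t x^2 - t y^2 + 2 sqrt(t(1-t)) x y attains
       the bound, which yields L2_linf 2 = (g peak)^(3/4). *)

section \<open>Rational powers and roots\<close>

text \<open>Raising x^(m/n) to the n-th power gives back x^m; with monotonicity of
  n-th powers this turns bounds on x^(m/n) into polynomial inequalities
  between rationals, which simp can decide.\<close>

lemma powr_frac_power:
  fixes x :: real
  assumes "0 \<le> x" "0 < m" "0 < n"
  shows "(x powr (real m / real n)) ^ n = x ^ m"
proof (cases "x = 0")
  case False
  then have "(x powr (real m / real n)) ^ n = x powr real m"
    using assms by (simp add: powr_power)
  then show ?thesis using assms False by (simp add: powr_realpow)
qed (use assms in \<open>simp add: power_0_left\<close>)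

lemma le_powr_frac:
  fixes x L :: real
  assumes "0 \<le> x" "0 \<le> L" "0 < m" "0 < n" "L ^ n \<le> x ^ m"
  shows "L \<le> x powr (real m / real n)"
  using assms powr_frac_power[of x m n] power_mono_iff[of L "x powr (real m / real n)" n]
  by simp

lemma powr_frac_le:
  fixes x U :: real
  assumes "0 \<le> x" "0 \<le> U" "0 < m" "0 < n" "x ^ m \<le> U ^ n"
  shows "x powr (real m / real n) \<le> U"
  using assms powr_frac_power[of x m n] power_mono_iff[of "x powr (real m / real n)" U n]
  by simp

lemma powr43_le_self:
  fixes x :: real
  assumes "0 \<le> x" "x \<le> 1"
  shows "x powr (4/3) \<le> x"
  using assms powr_mono'[of 1 "4/3" x] by simp

lemma sqrt_powr43:
  fixes q :: real
  assumes "0 \<le> q"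
  shows "sqrt q powr (4/3) = q powr (2/3)"
  using assms by (simp add: powr_half_sqrt[symmetric] powr_powr)

section \<open>Quadratic forms on the square\<close>

definition qform :: "real \<Rightarrow> real \<Rightarrow> real \<Rightarrow> real \<Rightarrow> real \<Rightarrow> real" where
  "qform a b d x y = a * x^2 + b * y^2 + 2 * d * x * y"

definition qpoly :: "real \<Rightarrow> real \<Rightarrow> real \<Rightarrow> (nat \<Rightarrow> real) \<Rightarrow> real" where
  "qpoly a b d = (\<lambda>x. qform a b d (x 0) (x 1))"

definition unit_bounded :: "real \<Rightarrow> real \<Rightarrow> real \<Rightarrow> bool" where
  "unit_bounded a b d \<longleftrightarrow>
     (\<forall>x y. \<bar>x\<bar> \<le> 1 \<longrightarrow> \<bar>y\<bar> \<le> 1 \<longrightarrow> \<bar>qform a b d x y\<bar> \<le> 1)"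

definition coeff_mass :: "real \<Rightarrow> real \<Rightarrow> real \<Rightarrow> real" where
  "coeff_mass a b d = \<bar>a\<bar> powr (4/3) + \<bar>b\<bar> powr (4/3) + 2 * \<bar>d\<bar> powr (4/3)"

text \<open>Every 2-homogeneous polynomial on R^2 is a quadratic form (symmetrize the
  mixed coefficients), and conversely.\<close>
lemma hom2_poly_2_iff: "hom2_poly 2 P \<longleftrightarrow> (\<exists>a b d. P = qpoly a b d)"
proof
  assume "hom2_poly 2 P"
  then obtain c where c: "\<And>x. P x = (\<Sum>i<2. \<Sum>j<2. c i j * x i * x j)"
    unfolding hom2_poly_def by blast
  have "P = qpoly (c 0 0) (c 1 1) ((c 0 1 + c 1 0) / 2)"
    by (rule ext) (simp add: c qpoly_def qform_def numeral_2_eq_2 power2_eq_square algebra_simps)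
  then show "\<exists>a b d. P = qpoly a b d" by blast
next
  assume "\<exists>a b d. P = qpoly a b d"
  then obtain a b d where P: "P = qpoly a b d" by blast
  define c :: "nat \<Rightarrow> nat \<Rightarrow> real" where
    "c i j = (if i = 0 \<and> j = 0 then a else if i = 1 \<and> j = 1 then b
              else if i = 0 \<and> j = 1 then 2 * d else 0)" for i j
  have "P x = (\<Sum>i<2. \<Sum>j<2. c i j * x i * x j)" for x
    by (simp add: P c_def qpoly_def qform_def numeral_2_eq_2 power2_eq_square algebra_simps)
  then show "hom2_poly 2 P" unfolding hom2_poly_def by blast
qed

text \<open>The polar of the form has matrix ((a,d),(d,b)).\<close>
lemma Phi2_qpoly: "Phi2 2 (qpoly a b d) = coeff_mass a b d powr (3/4)"
proof -
  have "polar2 (qpoly a b d) (unitv i) (unitv j) =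
      (if i = 0 \<and> j = 0 then a else if i = 1 \<and> j = 1 then b else d)" if "i < 2" "j < 2" for i j
    using that unfolding polar2_def unitv_def qpoly_def qform_def
    by (auto simp: less_2_cases_iff)
  then show ?thesis
    unfolding Phi2_def coeff_mass_def by (simp add: numeral_2_eq_2 algebra_simps)
qed

lemma qform_abs_le:
  assumes "\<bar>x\<bar> \<le> 1" "\<bar>y\<bar> \<le> 1"
  shows "\<bar>qform a b d x y\<bar> \<le> \<bar>a\<bar> + \<bar>b\<bar> + 2 * \<bar>d\<bar>"
proof -
  have "\<bar>x^2\<bar> \<le> 1" "\<bar>y^2\<bar> \<le> 1" "\<bar>x * y\<bar> \<le> 1"
    using assms by (simp_all add: abs_square_le_1 abs_mult mult_le_one)
  then have "\<bar>a * x^2\<bar> \<le> \<bar>a\<bar>" "\<bar>b * y^2\<bar> \<le> \<bar>b\<bar>" "\<bar>2 * d * (x * y)\<bar> \<le> 2 * \<bar>d\<bar>"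
    by (simp_all add: abs_mult mult_left_le)
  then show ?thesis
    unfolding qform_def using abs_triangle_ineq[of "a * x^2 + b * y^2" "2 * d * (x * y)"]
      abs_triangle_ineq[of "a * x^2" "b * y^2"] by (simp add: mult.assoc)
qed

lemma poly_norm_qpoly_le_1: "poly_norm 2 (qpoly a b d) \<le> 1 \<longleftrightarrow> unit_bounded a b d"
proof -
  define S where "S = {\<bar>qpoly a b d z\<bar> | z. \<forall>i<(2::nat). \<bar>z i\<bar> \<le> 1}"
  have S: "S = {\<bar>qform a b d x y\<bar> | x y. \<bar>x\<bar> \<le> 1 \<and> \<bar>y\<bar> \<le> 1}"
  proof (intro set_eqI iffI)
    fix s assume "s \<in> S"
    then obtain z where "s = \<bar>qform a b d (z 0) (z 1)\<bar>" "\<forall>i<(2::nat). \<bar>z i\<bar> \<le> 1"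
      unfolding S_def qpoly_def by blast
    then show "s \<in> {\<bar>qform a b d x y\<bar> | x y. \<bar>x\<bar> \<le> 1 \<and> \<bar>y\<bar> \<le> 1}" by fastforce
  next
    fix s assume "s \<in> {\<bar>qform a b d x y\<bar> | x y. \<bar>x\<bar> \<le> 1 \<and> \<bar>y\<bar> \<le> 1}"
    then obtain x y where "s = \<bar>qform a b d x y\<bar>" "\<bar>x\<bar> \<le> 1" "\<bar>y\<bar> \<le> 1" by blast
    then show "s \<in> S"
      unfolding S_def qpoly_def
      by (intro CollectI exI[of _ "\<lambda>i. if i = 0 then x else y"]) (auto simp: less_2_cases_iff)
  qed
  have "S \<noteq> {}" unfolding S by (auto intro!: exI[of _ 0] simp: qform_def)
  moreover have "bdd_above S"
    unfolding S by (rule bdd_aboveI[of _ "\<bar>a\<bar> + \<bar>b\<bar> + 2 * \<bar>d\<bar>"]) (auto intro: qform_abs_le)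
  ultimately have "Sup S \<le> 1 \<longleftrightarrow> (\<forall>s\<in>S. s \<le> 1)" by (rule cSup_le_iff)
  then show ?thesis unfolding poly_norm_def S_def[symmetric] unit_bounded_def S by blast
qed

lemma unit_bounded_flip:
  assumes "unit_bounded a b d"
  shows "unit_bounded a b (-d)"
  unfolding unit_bounded_def
proof (intro allI impI)
  fix x y :: real assume "\<bar>x\<bar> \<le> 1" "\<bar>y\<bar> \<le> 1"
  then have "\<bar>qform a b d x (-y)\<bar> \<le> 1" using assms unfolding unit_bounded_def by simp
  then show "\<bar>qform a b (-d) x y\<bar> \<le> 1" by (simp add: qform_def)
qed

lemma unit_bounded_neg:
  assumes "unit_bounded a b d"
  shows "unit_bounded (-a) (-b) (-d)"
proof -
  have "qform (-a) (-b) (-d) x y = - qform a b d x y" for x y by (simp add: qform_def)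
  then show ?thesis using assms unfolding unit_bounded_def by simp
qed

lemma unit_bounded_swap:
  assumes "unit_bounded a b d"
  shows "unit_bounded b a d"
  unfolding unit_bounded_def
proof (intro allI impI)
  fix x y :: real assume "\<bar>x\<bar> \<le> 1" "\<bar>y\<bar> \<le> 1"
  then have "\<bar>qform a b d y x\<bar> \<le> 1" using assms unfolding unit_bounded_def by simp
  then show "\<bar>qform b a d x y\<bar> \<le> 1" by (simp add: qform_def algebra_simps)
qed

section \<open>The profile function and its maximum\<close>

definition profile :: "real \<Rightarrow> real" where
  "profile t = 2 * t powr (4/3) + 2 * (t * (1 - t)) powr (2/3)"

definition profile_deriv :: "real \<Rightarrow> real" where
  "profile_deriv t = (8/3) * t powr (1/3) + (4/3) * (t * (1 - t)) powr (-1/3) * (1 - 2 * t)"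

text \<open>The cubic 8 t^2 (1-t) - (2t-1)^3 = -16 t^3 + 20 t^2 - 6 t + 1 governing the
  sign of the derivative.\<close>
definition profile_cubic :: "real \<Rightarrow> real" where
  "profile_cubic t = 8 * t^2 * (1 - t) - (2 * t - 1)^3"

lemma profile_sqrt:
  assumes "0 \<le> t" "t \<le> 1"
  shows "profile t = 2 * t powr (4/3) + 2 * sqrt (t * (1 - t)) powr (4/3)"
  using assms by (simp add: profile_def sqrt_powr43)

lemma profile_one: "profile 1 = 2"
  by (simp add: profile_def)

lemma profile_has_deriv:
  assumes "0 < t" "t < 1"
  shows "(profile has_real_derivative profile_deriv t) (at t)"
proof -
  have q: "t * (1 - t) > 0" using assms by simp
  have "((\<lambda>t. 2 * t powr (4/3) + 2 * (t * (1 - t)) powr (2/3)) has_real_derivative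
     2 * ((4/3) * t powr (4/3 - 1) * 1)
       + 2 * ((2/3) * (t * (1 - t)) powr (2/3 - 1) * (1 * (1 - t) + t * (0 - 1)))) (at t)"
    by (rule derivative_eq_intros refl | use assms q in simp)+
  then show ?thesis unfolding profile_def[abs_def] profile_deriv_def by (simp add: algebra_simps)
qed

text \<open>With w = (t^2 (1-t))^(1/3) one has g'(t) (t(1-t))^(1/3) = (4/3)(2w - (2t-1))
  and h(t) = (2w)^3 - (2t-1)^3, so g' and h have the same sign.\<close>
lemma profile_deriv_sign:
  assumes "0 < t" "t < 1"
  shows "profile_cubic t > 0 \<Longrightarrow> profile_deriv t > 0"
    and "profile_cubic t < 0 \<Longrightarrow> profile_deriv t < 0"
proof -
  define q where "q = t * (1 - t)"
  have q: "q > 0" using assms by (simp add: q_def)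
  define w where "w = (t * q) powr (1/3)"
  have "w ^ 3 = t * q"
    using powr_frac_power[of "t * q" 1 3] q assms by (simp add: w_def)
  then have cubic: "profile_cubic t = (2 * w)^3 - (2 * t - 1)^3"
    unfolding profile_cubic_def q_def by (simp add: power2_eq_square power3_eq_cube algebra_simps)
  have "q powr (-1/3) * q powr (1/3) = 1" using q by (simp add: powr_add[symmetric])
  moreover have "t powr (1/3) * q powr (1/3) = w" using q assms by (simp add: w_def powr_mult)
  moreover have "profile_deriv t * q powr (1/3) = (8/3) * (t powr (1/3) * q powr (1/3))
      + (4/3) * (1 - 2 * t) * (q powr (-1/3) * q powr (1/3))"
    unfolding profile_deriv_def q_def[symmetric] by (simp add: algebra_simps)
  ultimately have scaled: "profile_deriv t * q powr (1/3) = (4/3) * (2 * w - (2 * t - 1))"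
    by (simp add: field_simps)
  have qp: "q powr (1/3) > 0" using q by simp
  show "profile_deriv t > 0" if "profile_cubic t > 0"
  proof -
    have "\<not> 2 * w \<le> 2 * t - 1" using that cubic power_mono_odd[of 3 "2 * w" "2 * t - 1"] by auto
    then have "profile_deriv t * q powr (1/3) > 0" unfolding scaled by simp
    then show ?thesis using qp by (simp add: zero_less_mult_iff)
  qed
  show "profile_deriv t < 0" if "profile_cubic t < 0"
  proof -
    have "\<not> 2 * t - 1 \<le> 2 * w" using that cubic power_mono_odd[of 3 "2 * t - 1" "2 * w"] by auto
    then have "profile_deriv t * q powr (1/3) < 0" unfolding scaled by simp
    then show ?thesis using qp by (simp add: mult_less_0_iff)
  qed
qed

definition peak :: real where
  "peak = (SOME r. 914741/1000000 \<le> r \<and> r \<le> 914742/1000000 \<and> profile_cubic r = 0)"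

lemma peak_bounds: "914741/1000000 \<le> peak" "peak \<le> 914742/1000000"
  and profile_cubic_peak: "profile_cubic peak = 0"
proof -
  have "isCont profile_cubic x" for x unfolding profile_cubic_def by (intro continuous_intros)
  then have "\<exists>r. 914741/1000000 \<le> r \<and> r \<le> 914742/1000000 \<and> profile_cubic r = 0"
    by (intro IVT2) (auto simp: profile_cubic_def power_divide)
  then have "914741/1000000 \<le> peak \<and> peak \<le> 914742/1000000 \<and> profile_cubic peak = 0"
    unfolding peak_def by (rule someI_ex)
  then show "914741/1000000 \<le> peak" "peak \<le> 914742/1000000" "profile_cubic peak = 0" by auto
qed

text \<open>The cubic changes sign only at the peak: h t = (t - r) Q(t) with Q < 0,
  since the discriminant of Q is negative once r >= 9/10.\<close>
lemma profile_cubic_sign: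
  shows "t < peak \<Longrightarrow> profile_cubic t > 0" and "peak < t \<Longrightarrow> profile_cubic t < 0"
proof -
  define r where "r = peak"
  have r: "r \<ge> 9/10" using peak_bounds(1) by (simp add: r_def)
  define Q where "Q = -16 * (t^2 + t * r + r^2) + 20 * (t + r) - 6"
  have factor: "profile_cubic t = (t - r) * Q"
    using profile_cubic_peak unfolding profile_cubic_def Q_def r_def[symmetric]
    by (simp add: algebra_simps power2_eq_square power3_eq_cube)
  have "r * (768 * r - 640) \<ge> (9/10) * (768 * (9/10) - 640)"
    by (rule mult_mono) (use r in auto)
  then have disc: "16 + 640 * r - 768 * r^2 < 0" by (simp add: power2_eq_square algebra_simps)
  have "64 * Q = (16 + 640 * r - 768 * r^2) - (32 * t - (20 - 16 * r))^2"
    unfolding Q_def by (simp add: algebra_simps power2_eq_square)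
  moreover have "(32 * t - (20 - 16 * r))^2 \<ge> 0" by simp
  ultimately have Q: "Q < 0" using disc by linarith
  show "profile_cubic t > 0" if "t < peak" using factor Q that by (simp add: r_def mult_neg_neg)
  show "profile_cubic t < 0" if "peak < t" using factor Q that by (simp add: r_def mult_pos_neg)
qed

lemma profile_continuous: "continuous_on {0..1} profile"
  unfolding profile_def[abs_def]
  by (intro continuous_intros continuous_on_powr') (auto simp: mult_nonneg_nonneg)

lemma profile_increasing:
  assumes "0 \<le> a" "a < b" "b \<le> peak"
  shows "profile a < profile b"
proof (rule DERIV_pos_imp_increasing_open[OF assms(2)])
  fix x assume x: "a < x" "x < b"
  then have "0 < x" "x < 1" "profile_cubic x > 0"
    using assms peak_bounds(2) profile_cubic_sign(1) by auto
  then show "\<exists>y. DERIV profile x :> y \<and> y > 0"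
    using profile_has_deriv profile_deriv_sign(1) by blast
qed (use assms peak_bounds(2) in \<open>auto intro: continuous_on_subset[OF profile_continuous]\<close>)

lemma profile_decreasing:
  assumes "peak \<le> a" "a < b" "b \<le> 1"
  shows "profile b < profile a"
proof (rule DERIV_neg_imp_decreasing_open[OF assms(2)])
  fix x assume x: "a < x" "x < b"
  then have "0 < x" "x < 1" "profile_cubic x < 0"
    using assms peak_bounds(1) profile_cubic_sign(2) by auto
  then show "\<exists>y. DERIV profile x :> y \<and> y < 0"
    using profile_has_deriv profile_deriv_sign(2) by blast
qed (use assms peak_bounds(1) in \<open>auto intro: continuous_on_subset[OF profile_continuous]\<close>)

text \<open>The peak maximizes g on [0,1]; on [0,1/2] use g t <= g (1-t), as the two
  terms are symmetric resp. increasing under t -> 1 - t.\<close>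
lemma profile_le_peak:
  assumes "0 \<le> t" "t \<le> 1"
  shows "profile t \<le> profile peak"
proof -
  have upper_half: "profile s \<le> profile peak" if "1/2 \<le> s" "s \<le> 1" for s
    using profile_increasing[of s peak] profile_decreasing[of peak s] that peak_bounds
    by (cases s peak rule: linorder_cases) auto
  show ?thesis
  proof (cases "1/2 \<le> t")
    case False
    have "t powr (4/3) \<le> (1 - t) powr (4/3)" using False assms by (intro powr_mono2) auto
    then have "profile t \<le> profile (1 - t)" by (simp add: profile_def mult.commute)
    also have "\<dots> \<le> profile peak" using False assms by (intro upper_half) auto
    finally show ?thesis .
  qed (use assms upper_half in auto)
qed

section \<open>Numerical value at the peak\<close>

text \<open>Enclose peak^(4/3) and (peak (1-peak))^(2/3) between rationals, using
  monotonicity in peak and the root lemmas; this pins down g peak to 1e-5.\<close>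
lemma profile_peak_bounds:
  "2141014/1000000 \<le> profile peak" "profile peak \<le> 2141024/1000000"
proof -
  define r1 :: real where "r1 = 914741/1000000"
  define r2 :: real where "r2 = 914742/1000000"
  have r: "r1 \<le> peak" "peak \<le> r2" using peak_bounds by (auto simp: r1_def r2_def)
  have q_mono: "s * (1 - s) \<le> u * (1 - u)" if "1/2 \<le> u" "u \<le> s" for s u :: real
  proof -
    have "u * (1 - u) - s * (1 - s) = (s - u) * (s + u - 1)" by (simp add: algebra_simps)
    also have "\<dots> \<ge> 0" using that by (intro mult_nonneg_nonneg) auto
    finally show ?thesis by simp
  qed
  have qr2: "r2 * (1 - r2) \<le> peak * (1 - peak)"
    by (rule q_mono) (use r in \<open>auto simp: r1_def\<close>)
  have qr1: "peak * (1 - peak) \<le> r1 * (1 - r1)"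
    by (rule q_mono) (use r in \<open>auto simp: r1_def\<close>)
  have q0: "0 \<le> r2 * (1 - r2)" by (simp add: r2_def)
  have "887968/1000000 \<le> r1 powr (4/3)"
    using le_powr_frac[of r1 "887968/1000000" 4 3] by (simp add: r1_def power_divide)
  also have "\<dots> \<le> peak powr (4/3)" using r by (intro powr_mono2) (auto simp: r1_def)
  finally have A1: "887968/1000000 \<le> peak powr (4/3)" .
  have "peak powr (4/3) \<le> r2 powr (4/3)" using r by (intro powr_mono2) (auto simp: r1_def)
  also have "\<dots> \<le> 887971/1000000"
    using powr_frac_le[of r2 "887971/1000000" 4 3] by (simp add: r2_def power_divide)
  finally have A2: "peak powr (4/3) \<le> 887971/1000000" .
  have "182539/1000000 \<le> (r2 * (1 - r2)) powr (2/3)"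
    using le_powr_frac[of "r2 * (1 - r2)" "182539/1000000" 2 3] by (simp add: r2_def power_divide)
  also have "\<dots> \<le> (peak * (1 - peak)) powr (2/3)" using qr2 q0 by (intro powr_mono2) auto
  finally have B1: "182539/1000000 \<le> (peak * (1 - peak)) powr (2/3)" .
  have "(peak * (1 - peak)) powr (2/3) \<le> (r1 * (1 - r1)) powr (2/3)"
    using qr1 qr2 q0 by (intro powr_mono2) auto
  also have "\<dots> \<le> 182541/1000000"
    using powr_frac_le[of "r1 * (1 - r1)" "182541/1000000" 2 3] by (simp add: r1_def power_divide)
  finally have B2: "(peak * (1 - peak)) powr (2/3) \<le> 182541/1000000" .
  show "2141014/1000000 \<le> profile peak" "profile peak \<le> 2141024/1000000"
    using A1 A2 B1 B2 unfolding profile_def by linarith+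
qed

lemma profile_peak_powr_bounds:
  "176996/100000 \<le> profile peak powr (3/4)" "profile peak powr (3/4) \<le> 177/100"
proof -
  have "176996/100000 \<le> (2141014/1000000 :: real) powr (3/4)"
    using le_powr_frac[of "2141014/1000000" "176996/100000" 3 4] by (simp add: power_divide)
  also have "\<dots> \<le> profile peak powr (3/4)" using profile_peak_bounds by (intro powr_mono2) auto
  finally show "176996/100000 \<le> profile peak powr (3/4)" .
  have "profile peak powr (3/4) \<le> (2141024/1000000 :: real) powr (3/4)"
    using profile_peak_bounds by (intro powr_mono2) auto
  also have "\<dots> \<le> 177/100"
    using powr_frac_le[of "2141024/1000000" "177/100" 3 4] by (simp add: power_divide)
  finally show "profile peak powr (3/4) \<le> 177/100" .
qed

section \<open>The extremal problem\<close>

lemma unit_bounded_tests: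
  assumes "unit_bounded a b d"
  shows "\<bar>a\<bar> \<le> 1" "\<bar>b\<bar> \<le> 1" "\<bar>a + b + 2 * d\<bar> \<le> 1"
proof -
  have "\<bar>qform a b d 1 0\<bar> \<le> 1" "\<bar>qform a b d 0 1\<bar> \<le> 1" "\<bar>qform a b d 1 1\<bar> \<le> 1"
    using assms unfolding unit_bounded_def by simp_all
  then show "\<bar>a\<bar> \<le> 1" "\<bar>b\<bar> \<le> 1" "\<bar>a + b + 2 * d\<bar> \<le> 1" by (simp_all add: qform_def)
qed

lemma coeff_mass_le_sum:
  assumes "\<bar>a\<bar> \<le> 1" "\<bar>b\<bar> \<le> 1" "\<bar>d\<bar> \<le> 1"
  shows "coeff_mass a b d \<le> \<bar>a\<bar> + \<bar>b\<bar> + 2 * \<bar>d\<bar>"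
  using assms powr43_le_self[of "\<bar>a\<bar>"] powr43_le_self[of "\<bar>b\<bar>"] powr43_le_self[of "\<bar>d\<bar>"]
  unfolding coeff_mass_def by simp

text \<open>If the diagonal coefficients have opposite signs, a > 0 > -c, and d <= c,
  testing at (1, d/c) gives a + d^2/c <= 1, whence d <= sqrt(a(1-a)).\<close>
lemma mixed_coeff_bound:
  assumes "unit_bounded a (-c) d" "0 < c" "c \<le> a" "0 \<le> d" "d \<le> c"
  shows "d \<le> sqrt (a * (1 - a))"
proof -
  have "\<bar>qform a (-c) d 1 (d / c)\<bar> \<le> 1"
    using assms unfolding unit_bounded_def by simp
  moreover have "qform a (-c) d 1 (d / c) = a + d^2 / c"
    using assms(2) by (simp add: qform_def power2_eq_square field_simps)
  ultimately have "d^2 / c \<le> 1 - a" by simp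
  then have "d^2 \<le> c * (1 - a)" using assms(2) by (simp add: divide_le_eq mult.commute)
  also have "\<dots> \<le> a * (1 - a)"
    using assms unit_bounded_tests(1)[OF assms(1)] by (intro mult_right_mono) auto
  finally show ?thesis using assms(4) real_le_rsqrt by blast
qed

lemma coeff_mass_le_peak_normalized:
  assumes bounded: "unit_bounded a b d" and "0 \<le> d" "\<bar>b\<bar> \<le> a"
  shows "coeff_mass a b d \<le> profile peak"
proof -
  have tests: "\<bar>a\<bar> \<le> 1" "\<bar>b\<bar> \<le> 1" "\<bar>a + b + 2 * d\<bar> \<le> 1"
    using unit_bounded_tests[OF bounded] by auto
  have two: "2 \<le> profile peak" using profile_le_peak[of 1] profile_one by simp
  consider "0 \<le> b" | "b < 0" "d \<le> - b" | "b < 0" "- b < d" by linarith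
  then show ?thesis
  proof cases
    case 1
    then show ?thesis using coeff_mass_le_sum[of a b d] tests assms two by simp
  next
    case 2
    have a: "0 \<le> a" "a \<le> 1" using assms tests by auto
    have "d \<le> sqrt (a * (1 - a))"
      using mixed_coeff_bound[of a "-b" d] bounded 2 assms by simp
    then have "coeff_mass a b d \<le> 2 * a powr (4/3) + 2 * sqrt (a * (1 - a)) powr (4/3)"
      unfolding coeff_mass_def using assms a 2 powr_mono2[of "4/3" "-b" a] powr_mono2[of "4/3" d "sqrt (a * (1 - a))"]
      by simp
    also have "\<dots> = profile a" using a by (simp add: profile_sqrt)
    also have "\<dots> \<le> profile peak" using a by (rule profile_le_peak)
    finally show ?thesis .
  next
    case 3
    then have "\<bar>d\<bar> \<le> 1/2" "\<bar>b\<bar> \<le> 1/2" using tests assms by auto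
    then show ?thesis using coeff_mass_le_sum[of a b d] tests assms two by simp
  qed
qed

text \<open>Upper bound for every form bounded by 1 on the square, reducing to the
  normalized position by the symmetries of the square.\<close>
lemma coeff_mass_le_peak:
  assumes "unit_bounded a b d"
  shows "coeff_mass a b d \<le> profile peak"
proof -
  have sign_normal: "coeff_mass a b d \<le> profile peak"
    if bounded: "unit_bounded a b d" and ba: "\<bar>b\<bar> \<le> \<bar>a\<bar>" for a b d
  proof -
    have mass: "coeff_mass a b d = coeff_mass a' b' d'"
      if "\<bar>a'\<bar> = \<bar>a\<bar>" "\<bar>b'\<bar> = \<bar>b\<bar>" "\<bar>d'\<bar> = \<bar>d\<bar>" for a' b' d'
      using that by (simp add: coeff_mass_def)
    consider "0 \<le> a" "0 \<le> d" | "0 \<le> a" "d < 0" | "a < 0" "d \<le> 0" | "a < 0" "0 < d"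
      by linarith
    then show ?thesis
    proof cases
      case 1 then show ?thesis using coeff_mass_le_peak_normalized[OF bounded] ba by simp
    next
      case 2 then show ?thesis
        using coeff_mass_le_peak_normalized[OF unit_bounded_flip[OF bounded]] ba mass[of a b "-d"]
        by simp
    next
      case 3 then show ?thesis
        using coeff_mass_le_peak_normalized[OF unit_bounded_neg[OF bounded]] ba mass[of "-a" "-b" "-d"]
        by simp
    next
      case 4 then show ?thesis
        using coeff_mass_le_peak_normalized[OF unit_bounded_flip[OF unit_bounded_neg[OF bounded]]]
          ba mass[of "-a" "-b" d] by simp
    qed
  qed
  show ?thesis
  proof (cases "\<bar>b\<bar> \<le> \<bar>a\<bar>")
    case False
    then have "coeff_mass b a d \<le> profile peak"
      using sign_normal[OF unit_bounded_swap[OF assms]] by simp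
    then show ?thesis by (simp add: coeff_mass_def)
  qed (use sign_normal assms in auto)
qed

text \<open>The extremal forms t x^2 - t y^2 + 2 sqrt(t(1-t)) x y are bounded by 1:
  t (x^2 - Q) and t (Q + y^2) are perfect squares and x^2, y^2 <= 1.\<close>
lemma unit_bounded_extremal:
  assumes "0 < t" "t \<le> 1"
  shows "unit_bounded t (-t) (sqrt (t * (1 - t)))"
  unfolding unit_bounded_def
proof (intro allI impI)
  fix x y :: real assume xy: "\<bar>x\<bar> \<le> 1" "\<bar>y\<bar> \<le> 1"
  define s where "s = sqrt (t * (1 - t))"
  define Q where "Q = qform t (-t) s x y"
  have s2: "s^2 = t * (1 - t)" unfolding s_def using assms by simp
  have "t * (x^2 - Q) = (s * x - t * y)^2 + x^2 * (t * (1 - t) - s^2)"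
    unfolding Q_def qform_def by algebra
  then have "t * (x^2 - Q) \<ge> 0" using s2 by simp
  then have upper: "Q \<le> x^2" using assms by (simp add: zero_le_mult_iff)
  have "t * (Q + y^2) = (t * x + s * y)^2 + y^2 * (t * (1 - t) - s^2)"
    unfolding Q_def qform_def by algebra
  then have "t * (Q + y^2) \<ge> 0" using s2 by simp
  then have lower: "0 \<le> Q + y^2" using assms by (simp add: zero_le_mult_iff)
  have "x^2 \<le> 1" "y^2 \<le> 1" using xy by (simp_all add: abs_square_le_1)
  then show "\<bar>qform t (-t) (sqrt (t * (1 - t))) x y\<bar> \<le> 1"
    using upper lower unfolding Q_def s_def by linarith
qed

lemma coeff_mass_extremal:
  assumes "0 \<le> t" "t \<le> 1"
  shows "coeff_mass t (-t) (sqrt (t * (1 - t))) = profile t"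
  using assms by (simp add: coeff_mass_def profile_sqrt)

lemma L2_linf_2_eq: "L2_linf 2 = profile peak powr (3/4)"
  unfolding L2_linf_def
proof (rule cSup_eq_maximum)
  let ?P = "qpoly peak (-peak) (sqrt (peak * (1 - peak)))"
  have peak: "0 < peak" "peak \<le> 1" using peak_bounds by auto
  have "hom2_poly 2 ?P" "poly_norm 2 ?P \<le> 1"
    using hom2_poly_2_iff poly_norm_qpoly_le_1 unit_bounded_extremal[OF peak] by blast+
  moreover have "Phi2 2 ?P = profile peak powr (3/4)"
    using peak by (simp add: Phi2_qpoly coeff_mass_extremal)
  ultimately show "profile peak powr (3/4) \<in> {Phi2 2 P |P. hom2_poly 2 P \<and> poly_norm 2 P \<le> 1}"
    by (metis (mono_tags, lifting) mem_Collect_eq)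
next
  fix z assume "z \<in> {Phi2 2 P |P. hom2_poly 2 P \<and> poly_norm 2 P \<le> 1}"
  then obtain P where z: "z = Phi2 2 P" and "hom2_poly 2 P" "poly_norm 2 P \<le> 1" by blast
  moreover obtain a b d where P: "P = qpoly a b d"
    using \<open>hom2_poly 2 P\<close> hom2_poly_2_iff by blast
  ultimately have "coeff_mass a b d \<le> profile peak"
    using poly_norm_qpoly_le_1 coeff_mass_le_peak by blast
  then show "z \<le> profile peak powr (3/4)"
    unfolding z P Phi2_qpoly by (intro powr_mono2) (auto simp: coeff_mass_def)
qed

theorem mainTheorem2:
  defines "f \<equiv> \<lambda>t::real. (2 * t powr (4/3) + 2 * (sqrt (t * (1 - t))) powr (4/3)) powr (3/4)"
  shows "L2_linf 2 = Sup (f ` {1/2..1})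
    \<and> \<bar>Sup (f ` {1/2..1}) - 1.7700\<bar> < 0.00005
    \<and> (\<exists>t0\<in>{1/2..1}. f t0 = Sup (f ` {1/2..1}) \<and> \<bar>t0 - 0.9147\<bar> < 0.00005)"
proof -
  have f_profile: "f t = profile t powr (3/4)" if "t \<in> {1/2..1}" for t
    using that by (simp add: f_def profile_sqrt)
  have peak_in: "peak \<in> {1/2..1}" using peak_bounds by auto
  have "f t \<le> f peak" if "t \<in> {1/2..1}" for t
    using that peak_in profile_le_peak[of t] f_profile
    by (simp add: powr_mono2 profile_def)
  then have sup: "Sup (f ` {1/2..1}) = profile peak powr (3/4)"
    using peak_in f_profile by (intro cSup_eq_maximum) auto
  show ?thesis
  proof (intro conjI)
    show "L2_linf 2 = Sup (f ` {1/2..1})" using L2_linf_2_eq sup by simp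
    show "\<bar>Sup (f ` {1/2..1}) - 1.7700\<bar> < 0.00005"
      using profile_peak_powr_bounds unfolding sup by simp
    show "\<exists>t0\<in>{1/2..1}. f t0 = Sup (f ` {1/2..1}) \<and> \<bar>t0 - 0.9147\<bar> < 0.00005"
      using peak_in peak_bounds f_profile sup by (intro bexI[of _ peak]) auto
  qed
qed

end
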